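(* Let $\Omega$ be a distribution of $\Sigma$, $\mathsf{Obs}$ an observation function over $\Sigma$, and $(\sigma_N,P)\in\mathit{CED}(\Omega,\mathsf{Obs})$. (1) For every discrepancy $\delta\in\mathcal D(\sigma_N,P)$ and every $\sigma\in\mathsf{img}(P)$, $\sigma_N|_\delta\ne\sigma|_\delta$. Consequently there is no function $P':\Omega\cup\{\delta\}\to\mathsf{Dom}(\mathsf{Obs})$ extending $P$ with $P'(\delta)\in\mathsf{img}(P)$ such that $(\sigma_N,P')\in\mathit{CED}(\Omega\cup\{\delta\},\mathsf{Obs})$. (2) Conversely, let $\Omega'$ be any distribution of $\Sigma$ such that no $\delta\in\mathcal D(\sigma_N,P)$ is contained in any $\Sigma_j\in\Omega'$. Then for every $\Sigma_j\in\Omega'$ there is $\sigma\in\mathsf{img}(P)$ with $\sigma_N|_{\Sigma_j}=\sigma|_{\Sigma_j}$; hence there exists $P'':\Omega'\to\mathsf{img}(P)$ with $(\sigma_N,P'')\in\mathit{CED}(\Omega',\mathsf{Obs})$.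
   Context: $\sigma|_{\Sigma'}$ is the projection of a word onto $\Sigma'$ (subsequence of symbols in $\Sigma'$). A distribution of $\Sigma$ is a finite set of subsets of $\Sigma$ with union $\Sigma$. An observation function is a partial map $\mathsf{Obs}:\Sigma^\star\rightharpoonup\{+,-\}$ with finite domain. A counter-example to $\Omega\models\mathsf{Obs}$ is a pair $(\sigma_N,P)$ with $\sigma_N\in\mathsf{Dom}(\mathsf{Obs})$, $\mathsf{Obs}(\sigma_N)=-$, and $P:\Omega\to\mathsf{Dom}(\mathsf{Obs})$ such that for all $\Sigma_i\in\Omega$, $\mathsf{Obs}(P(\Sigma_i))=+$ and $\sigma_N|_{\Sigma_i}=P(\Sigma_i)|_{\Sigma_i}$; $\mathit{CED}(\Omega,\mathsf{Obs})$ is the set of these, and $\mathsf{img}(P)$ is the image of $P$. Discrepancies: for a word $w$ let $\Sigma^m(w)$ be the multiset of its symbols. For $\Sigma_i\in\Omega$, the multiplicity discrepancies are $\mathcal D_m^{\Sigma_i}(\sigma_N,P)=\{a\in\Sigma\mid a$ occurs a different number of times in $\sigma_N$ and in $P(\Sigma_i)\}$. Let $\theta=\Sigma\setminus\mathcal D_m^{\Sigma_i}(\sigma_N,P)$, $u=\sigma_N|_\theta$, $w=P(\Sigma_i)|_\theta$ (these are permutations of each other); let $\pi$ be the unique bijection of positions with $u[j]=w[\pi(j)]$ for all $j$ and such that $j<k$, $u[j]=u[k]$ imply $\pi(j)<\pi(k)$. The order discrepancies are $\mathcal D_o^{\Sigma_i}(\sigma_N,P)=\{\{u[j],u[k]\}\mid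 j<k,\ \pi(j)>\pi(k)\}$. A set $\delta\subseteq\Sigma$ is a discrepancy for $(\sigma_N,P)$ iff for every $\Sigma_i\in\Omega$, either $\delta\cap\mathcal D_m^{\Sigma_i}(\sigma_N,P)\neq\emptyset$ or some element of $\mathcal D_o^{\Sigma_i}(\sigma_N,P)$ is a subset of $\delta$; $\mathcal D(\sigma_N,P)$ is the set of all discrepancies. *)

theory Defs
  imports Main
begin

datatype verdict = Pos | Neg

definition proj :: "'a list \<Rightarrow> 'a set \<Rightarrow> 'a list" where
  "proj w S = filter (\<lambda>x. x \<in> S) w"

definition is_distribution :: "'a set \<Rightarrow> 'a set set \<Rightarrow> bool" where
  "is_distribution \<Sigma> \<Omega> \<longleftrightarrow> finite \<Omega> \<and> (\<forall>S\<in>\<Omega>. S \<subseteq> \<Sigma>) \<and> \<Union>\<Omega> = \<Sigma>"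

definition is_observation :: "'a set \<Rightarrow> ('a list \<Rightarrow> verdict option) \<Rightarrow> bool" where
  "is_observation \<Sigma> Obs \<longleftrightarrow> finite (dom Obs) \<and> dom Obs \<subseteq> lists \<Sigma>"

text \<open>Counter-examples (\<sigma>N, P) to \<Omega> |= Obs; P is a map \<Omega> \<rightarrow> Dom(Obs)
  (only its values on \<Omega> are relevant).\<close>
definition is_CED :: "'a set set \<Rightarrow> ('a list \<Rightarrow> verdict option) \<Rightarrow> 'a list \<Rightarrow> ('a set \<Rightarrow> 'a list) \<Rightarrow> bool" where
  "is_CED \<Omega> Obs \<sigma>N P \<longleftrightarrow>
     Obs \<sigma>N = Some Neg \<and>
     (\<forall>S\<in>\<Omega>. Obs (P S) = Some Pos \<and> proj \<sigma>N S = proj (P S) S)"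

definition Dm :: "'a set \<Rightarrow> 'a list \<Rightarrow> ('a set \<Rightarrow> 'a list) \<Rightarrow> 'a set \<Rightarrow> 'a set" where
  "Dm \<Sigma> \<sigma>N P S = {a \<in> \<Sigma>. count_list \<sigma>N a \<noteq> count_list (P S) a}"

definition stable_perm :: "'a list \<Rightarrow> 'a list \<Rightarrow> nat \<Rightarrow> nat" where
  "stable_perm u w = (THE \<pi>. bij_betw \<pi> {..<length u} {..<length w} \<and>
        (\<forall>j<length u. u ! j = w ! (\<pi> j)) \<and>
        (\<forall>j k. j < k \<and> k < length u \<and> u ! j = u ! k \<longrightarrow> \<pi> j < \<pi> k) \<and>
        (\<forall>j. j \<ge> length u \<longrightarrow> \<pi> j = j))"

definition Do :: "'a set \<Rightarrow> 'a list \<Rightarrow> ('a set \<Rightarrow> 'a list) \<Rightarrow> 'a set \<Rightarrow> 'a set set" where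
  "Do \<Sigma> \<sigma>N P S =
    (let \<theta> = \<Sigma> - Dm \<Sigma> \<sigma>N P S; u = proj \<sigma>N \<theta>; w = proj (P S) \<theta>; \<pi> = stable_perm u w
     in {{u ! j, u ! k} | j k. j < k \<and> k < length u \<and> \<pi> j > \<pi> k})"

definition is_discrepancy :: "'a set \<Rightarrow> 'a set set \<Rightarrow> 'a list \<Rightarrow> ('a set \<Rightarrow> 'a list) \<Rightarrow> 'a set \<Rightarrow> bool" where
  "is_discrepancy \<Sigma> \<Omega> \<sigma>N P \<delta> \<longleftrightarrow> \<delta> \<subseteq> \<Sigma> \<and>
     (\<forall>S\<in>\<Omega>. \<delta> \<inter> Dm \<Sigma> \<sigma>N P S \<noteq> {} \<or> (\<exists>p\<in>Do \<Sigma> \<sigma>N P S. p \<subseteq> \<delta>))"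

definition Discr :: "'a set \<Rightarrow> 'a set set \<Rightarrow> 'a list \<Rightarrow> ('a set \<Rightarrow> 'a list) \<Rightarrow> 'a set set" where
  "Discr \<Sigma> \<Omega> \<sigma>N P = {\<delta>. is_discrepancy \<Sigma> \<Omega> \<sigma>N P \<delta>}"

end

theory Submission
  imports Defs
begin

(* Tag every letter of a word with the number of its earlier occurrences. The tagged words
   of u and w (equal letter counts) are two orderings of one finite set, and the stable
   permutation \<pi> is exactly the map between the positions of equal tags. Hence u and w
   have the same projection onto D iff the two orderings agree on the tags with letters
   in D, i.e. iff no inversion of \<pi> has both letters in D. Together with the letter
   counts this shows that a subalphabet D \<subseteq> \<Sigma> is a discrepancy exactly when the
   projection of \<sigma>N onto D differs from that of every P S; both parts of the theorem
   are direct consequences. *)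

primrec index :: "'b list \<Rightarrow> 'b \<Rightarrow> nat" where
  "index [] y = 0"
| "index (x # xs) y = (if x = y then 0 else Suc (index xs y))"

lemma index_less_length: "y \<in> set xs \<Longrightarrow> index xs y < length xs"
  by (induction xs) auto

lemma nth_index: "y \<in> set xs \<Longrightarrow> xs ! index xs y = y"
  by (induction xs) auto

lemma index_nth: "distinct xs \<Longrightarrow> i < length xs \<Longrightarrow> index xs (xs ! i) = i"
proof (induction xs arbitrary: i)
  case (Cons x xs)
  then show ?case by (cases i) auto
qed simp

lemma inj_on_index: "inj_on (index xs) (set xs)"
  by (metis inj_onI nth_index)

lemma map_index_self: "distinct xs \<Longrightarrow> map (index xs) xs = [0..<length xs]"
  by (rule nth_equalityI) (simp_all add: index_nth)

lemma bij_betw_index: "distinct xs \<Longrightarrow> bij_betw (index xs) (set xs) {..<length xs}"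
  by (rule bij_betw_imageI[OF inj_on_index])
     (force simp: index_less_length image_iff intro: index_nth[symmetric])

lemma sorted_wrt_filter_iff_nth:
  "sorted_wrt R (filter Q xs) \<longleftrightarrow>
   (\<forall>j k. j < k \<and> k < length xs \<and> Q (xs ! j) \<and> Q (xs ! k) \<longrightarrow> R (xs ! j) (xs ! k))"
proof
  assume sorted: "sorted_wrt R (filter Q xs)"
  show "\<forall>j k. j < k \<and> k < length xs \<and> Q (xs ! j) \<and> Q (xs ! k) \<longrightarrow> R (xs ! j) (xs ! k)"
  proof (intro allI impI, elim conjE)
    fix j k assume jk: "j < k" "k < length xs" and Q: "Q (xs ! j)" "Q (xs ! k)"
    have "xs ! j \<in> set (filter Q (take (Suc j) xs))"
      using jk Q by (auto simp: in_set_conv_nth intro!: exI[of _ j])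
    moreover have "xs ! k \<in> set (filter Q (drop (Suc j) xs))"
      using jk Q by (auto simp: in_set_conv_nth intro!: exI[of _ "k - Suc j"])
    moreover have "sorted_wrt R (filter Q (take (Suc j) xs) @ filter Q (drop (Suc j) xs))"
      using sorted by (metis append_take_drop_id filter_append)
    ultimately show "R (xs ! j) (xs ! k)"
      by (simp add: sorted_wrt_append)
  qed
next
  assume "\<forall>j k. j < k \<and> k < length xs \<and> Q (xs ! j) \<and> Q (xs ! k) \<longrightarrow> R (xs ! j) (xs ! k)"
  then have "sorted_wrt (\<lambda>x y. Q x \<longrightarrow> Q y \<longrightarrow> R x y) xs"
    by (auto simp: sorted_wrt_iff_nth_less)
  then have "sorted_wrt (\<lambda>x y. Q x \<longrightarrow> Q y \<longrightarrow> R x y) (filter Q xs)"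
    by (rule sorted_wrt_filter)
  then show "sorted_wrt R (filter Q xs)"
    by (rule sorted_wrt_mono_rel[rotated]) simp
qed

lemma filter_eq_iff_sorted_wrt_index:
  assumes "distinct ys" "set xs = set ys"
  shows "filter Q xs = filter Q ys \<longleftrightarrow>
         sorted_wrt (\<lambda>x y. index ys x < index ys y) (filter Q xs)"
proof
  have "sorted_wrt (<) (map (index ys) ys)"
    using assms(1) by (simp add: map_index_self)
  then show "sorted_wrt (\<lambda>x y. index ys x < index ys y) (filter Q xs)"
    if "filter Q xs = filter Q ys"
    unfolding that sorted_wrt_map by (rule sorted_wrt_filter)
next
  have strict: "sorted (map (index ys) zs) \<and> distinct (map (index ys) zs)"
    if "sorted_wrt (\<lambda>x y. index ys x < index ys y) zs" for zs
    using that by (metis strict_sorted_iff sorted_wrt_map)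
  assume "sorted_wrt (\<lambda>x y. index ys x < index ys y) (filter Q xs)"
  moreover have "sorted_wrt (\<lambda>x y. index ys x < index ys y) (filter Q ys)"
    using assms(1) by (intro sorted_wrt_filter) (simp flip: sorted_wrt_map add: map_index_self)
  moreover have "inj_on (index ys) (set (filter Q xs) \<union> set (filter Q ys))"
    using assms(2) by (auto intro: inj_on_subset[OF inj_on_index])
  ultimately show "filter Q xs = filter Q ys"
    using assms(2) by (intro map_sorted_distinct_set_unique[where f = "index ys"]) (auto dest: strict)
qed

lemma filter_eq_iff_no_index_inversion:
  assumes "distinct xs" "distinct ys" "set xs = set ys"
  shows "filter Q xs = filter Q ys \<longleftrightarrow>
    \<not> (\<exists>j k. j < k \<and> k < length xs \<and> Q (xs ! j) \<and> Q (xs ! k) \<and>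
            index ys (xs ! k) < index ys (xs ! j))"
proof -
  have distinct_index: "index ys (xs ! j) \<noteq> index ys (xs ! k)" if "j < k" "k < length xs" for j k
    using that assms inj_on_index[of ys] nth_eq_iff_index_eq[OF assms(1), of j k]
    by (metis inj_on_contraD nth_mem order.strict_trans order_less_irrefl)
  have "filter Q xs = filter Q ys \<longleftrightarrow>
    (\<forall>j k. j < k \<and> k < length xs \<and> Q (xs ! j) \<and> Q (xs ! k) \<longrightarrow>
           index ys (xs ! j) < index ys (xs ! k))"
    by (simp only: filter_eq_iff_sorted_wrt_index[OF assms(2,3)] sorted_wrt_filter_iff_nth)
  then show ?thesis
    by (meson distinct_index linorder_neqE_nat order.asym)
qed

lemma count_list_filter: "count_list (filter Q v) a = (if Q a then count_list v a else 0)"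
  by (induction v) auto

lemma count_list_take_mono: "i \<le> i' \<Longrightarrow> count_list (take i v) a \<le> count_list (take i' v) a"
  by (metis append_take_drop_id count_list_append le_add1 min.absorb1 take_take)

lemma count_list_take_eq_card:
  "j \<le> length v \<Longrightarrow> count_list (take j v) a = card {i. i < j \<and> v ! i = a}"
  by (auto simp: count_list_eq_length_filter length_filter_conv_card intro!: arg_cong[where f = card])

definition annotate :: "'b list \<Rightarrow> ('b \<times> nat) list" where
  "annotate v = map (\<lambda>i. (v ! i, count_list (take i v) (v ! i))) [0..<length v]"

lemma length_annotate [simp]: "length (annotate v) = length v"
  by (simp add: annotate_def)

lemma nth_annotate: "i < length v \<Longrightarrow> annotate v ! i = (v ! i, count_list (take i v) (v ! i))"
  by (simp add: annotate_def)

lemma annotate_Nil [simp]: "annotate [] = []"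
  by (simp add: annotate_def)

lemma annotate_snoc: "annotate (v @ [x]) = annotate v @ [(x, count_list v x)]"
  by (auto simp: annotate_def nth_append intro!: map_cong)

lemma map_fst_annotate [simp]: "map fst (annotate v) = v"
  by (induction v rule: rev_induct) (auto simp: annotate_snoc)

lemma set_annotate: "set (annotate v) = {(x, c). c < count_list v x}"
proof (induction v rule: rev_induct)
  case (snoc x v)
  then show ?case
    by (auto simp: annotate_snoc split: if_splits)
qed simp

lemma distinct_annotate: "distinct (annotate v)"
  by (induction v rule: rev_induct) (auto simp: annotate_snoc set_annotate)

lemma annotate_filter: "annotate (filter Q v) = filter (\<lambda>p. Q (fst p)) (annotate v)"
  by (induction v rule: rev_induct) (auto simp: annotate_snoc count_list_filter)

lemma snd_annotate_less_iff:
  assumes "i < length v" "i' < length v" "v ! i = v ! i'"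
  shows "snd (annotate v ! i) < snd (annotate v ! i') \<longleftrightarrow> i < i'"
proof -
  have less: "count_list (take j v) (v ! j) < count_list (take k v) (v ! j)"
    if "j < k" "k < length v" for j k
  proof -
    have "count_list (take j v) (v ! j) < count_list (take (Suc j) v) (v ! j)"
      using that by (simp add: take_Suc_conv_app_nth)
    also have "\<dots> \<le> count_list (take k v) (v ! j)"
      using that by (simp add: count_list_take_mono)
    finally show ?thesis .
  qed
  show ?thesis
    using assms less[of i i'] less[of i' i] by (cases i i' rule: linorder_cases) (auto simp: nth_annotate)
qed

definition is_stable_perm :: "'b list \<Rightarrow> 'b list \<Rightarrow> (nat \<Rightarrow> nat) \<Rightarrow> bool" where
  "is_stable_perm u w \<pi> \<longleftrightarrow> bij_betw \<pi> {..<length u} {..<length w} \<and>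
        (\<forall>j<length u. u ! j = w ! (\<pi> j)) \<and>
        (\<forall>j k. j < k \<and> k < length u \<and> u ! j = u ! k \<longrightarrow> \<pi> j < \<pi> k) \<and>
        (\<forall>j. j \<ge> length u \<longrightarrow> \<pi> j = j)"

context
  fixes u w :: "'b list"
  assumes counts: "count_list u = count_list w"
begin

lemma set_annotate_eq: "set (annotate u) = set (annotate w)"
  using counts by (simp add: set_annotate)

definition stable_index :: "nat \<Rightarrow> nat" where
  "stable_index j = (if j < length u then index (annotate w) (annotate u ! j) else j)"

lemma annotate_stable_index:
  "j < length u \<Longrightarrow> stable_index j < length w \<and> annotate w ! stable_index j = annotate u ! j"
  using set_annotate_eq index_less_length[of "annotate u ! j" "annotate w"]
    nth_index[of "annotate u ! j" "annotate w"] nth_mem[of j "annotate u"]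
  by (simp add: stable_index_def)

lemma nth_stable_index: "j < length u \<Longrightarrow> w ! stable_index j = u ! j"
  using annotate_stable_index[of j] by (metis fst_conv nth_annotate)

lemma is_stable_perm_stable_index: "is_stable_perm u w stable_index"
  unfolding is_stable_perm_def
proof (intro conjI allI impI)
  have "bij_betw (index (annotate w) \<circ> (!) (annotate u)) {..<length u} {..<length w}"
    using bij_betw_nth[OF distinct_annotate] bij_betw_index[OF distinct_annotate]
    by (metis bij_betw_trans length_annotate set_annotate_eq)
  then show "bij_betw stable_index {..<length u} {..<length w}"
    by (rule bij_betw_cong[THEN iffD1, rotated]) (simp add: stable_index_def)
next
  fix j assume "j < length u"
  then show "u ! j = w ! stable_index j"
    by (simp add: nth_stable_index)
next
  fix j k assume jk: "j < k \<and> k < length u \<and> u ! j = u ! k"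
  note stable = annotate_stable_index[of j] annotate_stable_index[of k]
  have "snd (annotate w ! stable_index j) < snd (annotate w ! stable_index k)"
    using jk stable snd_annotate_less_iff[of j u k] by simp
  moreover have "w ! stable_index j = w ! stable_index k"
    using jk by (simp add: nth_stable_index)
  ultimately show "stable_index j < stable_index k"
    using jk stable snd_annotate_less_iff[of "stable_index j" w "stable_index k"] by simp
next
  fix j :: nat assume "length u \<le> j"
  then show "stable_index j = j" by (simp add: stable_index_def)
qed

lemma annotate_stable_perm:
  assumes \<pi>: "is_stable_perm u w \<pi>" and j: "j < length u"
  shows "annotate w ! \<pi> j = annotate u ! j"
proof -
  define a where "a = u ! j"
  define A where "A = {i. i < j \<and> u ! i = a}"
  define B where "B = {i. i < \<pi> j \<and> w ! i = a}"
  have bij: "bij_betw \<pi> {..<length u} {..<length w}"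
    and letters: "\<And>i. i < length u \<Longrightarrow> u ! i = w ! \<pi> i"
    and stable: "\<And>i k. i < k \<Longrightarrow> k < length u \<Longrightarrow> u ! i = u ! k \<Longrightarrow> \<pi> i < \<pi> k"
    using \<pi> by (auto simp: is_stable_perm_def)
  have \<pi>j: "\<pi> j < length w"
    using bij j by (auto simp: bij_betw_def)
  have "B = \<pi> ` A"
  proof (intro equalityI subsetI)
    fix i assume i: "i \<in> B"
    have "i \<in> \<pi> ` {..<length u}"
      using bij i \<pi>j by (simp add: B_def bij_betw_def)
    then obtain i' where i': "i' < length u" "i = \<pi> i'"
      by blast
    then have ua: "u ! i' = a"
      using i letters by (simp add: B_def)
    have "i' < j"
    proof (rule ccontr)
      assume "\<not> i' < j"
      then have "j < i'"
        using i i' by (cases "i' = j") (auto simp: B_def)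
      then show False
        using stable[of j i'] i i' ua by (simp add: B_def a_def)
    qed
    with ua show "i \<in> \<pi> ` A"
      using i' by (auto simp: A_def)
  qed (use j stable letters in \<open>auto simp: A_def B_def a_def\<close>)
  moreover have "inj_on \<pi> A"
    using bij j by (auto simp: A_def bij_betw_def intro: inj_on_subset)
  ultimately have "card B = card A"
    by (simp add: card_image)
  then have "count_list (take (\<pi> j) w) a = count_list (take j u) a"
    using j \<pi>j by (simp add: count_list_take_eq_card A_def B_def)
  then show ?thesis
    using j \<pi>j letters by (simp add: nth_annotate a_def)
qed

lemma stable_perm_eq_stable_index: "stable_perm u w = stable_index"
  unfolding stable_perm_def is_stable_perm_def[symmetric]
proof (rule the_equality)
  show "is_stable_perm u w stable_index"
    by (rule is_stable_perm_stable_index)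
next
  fix \<pi> assume \<pi>: "is_stable_perm u w \<pi>"
  show "\<pi> = stable_index"
  proof
    fix j show "\<pi> j = stable_index j"
    proof (cases "j < length u")
      case True
      then have "\<pi> j < length w"
        using \<pi> by (auto simp: is_stable_perm_def bij_betw_def)
      then show ?thesis
        using True annotate_stable_perm[OF \<pi> True] index_nth[OF distinct_annotate]
        by (metis length_annotate stable_index_def)
    qed (use \<pi> in \<open>simp add: is_stable_perm_def stable_index_def\<close>)
  qed
qed

lemma filter_eq_iff_no_inversion:
  "filter Q u = filter Q w \<longleftrightarrow>
   \<not> (\<exists>j k. j < k \<and> k < length u \<and> Q (u ! j) \<and> Q (u ! k) \<and>
           stable_perm u w k < stable_perm u w j)"
proof -
  have "filter Q u = filter Q w \<longleftrightarrow>
        filter (\<lambda>p. Q (fst p)) (annotate u) = filter (\<lambda>p. Q (fst p)) (annotate w)"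
    by (metis annotate_filter map_fst_annotate)
  also have "\<dots> \<longleftrightarrow> \<not> (\<exists>j k. j < k \<and> k < length u \<and> Q (u ! j) \<and> Q (u ! k) \<and>
           stable_index k < stable_index j)"
    by (auto simp: filter_eq_iff_no_index_inversion distinct_annotate set_annotate_eq
        stable_index_def nth_annotate)
  finally show ?thesis
    by (simp add: stable_perm_eq_stable_index)
qed

end

lemma count_list_proj: "count_list (proj v D) a = (if a \<in> D then count_list v a else 0)"
  by (simp add: proj_def count_list_filter)

lemma proj_proj: "proj (proj v A) B = proj v (A \<inter> B)"
  by (simp add: proj_def)

lemma proj_inter_eq_iff_no_order_discrepancy:
  "proj \<sigma>N ((\<Sigma> - Dm \<Sigma> \<sigma>N P S) \<inter> D) = proj (P S) ((\<Sigma> - Dm \<Sigma> \<sigma>N P S) \<inter> D) \<longleftrightarrow>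
   (\<forall>p\<in>Do \<Sigma> \<sigma>N P S. \<not> p \<subseteq> D)"
proof -
  define u where "u = proj \<sigma>N (\<Sigma> - Dm \<Sigma> \<sigma>N P S)"
  define w where "w = proj (P S) (\<Sigma> - Dm \<Sigma> \<sigma>N P S)"
  have counts: "count_list u = count_list w"
    by (auto simp: u_def w_def count_list_proj Dm_def)
  have "proj \<sigma>N ((\<Sigma> - Dm \<Sigma> \<sigma>N P S) \<inter> D) = proj (P S) ((\<Sigma> - Dm \<Sigma> \<sigma>N P S) \<inter> D) \<longleftrightarrow>
        filter (\<lambda>x. x \<in> D) u = filter (\<lambda>x. x \<in> D) w"
    by (simp add: u_def w_def flip: proj_proj) (simp add: proj_def)
  also have "\<dots> \<longleftrightarrow> (\<forall>p\<in>Do \<Sigma> \<sigma>N P S. \<not> p \<subseteq> D)"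
  proof -
    have Do_eq: "Do \<Sigma> \<sigma>N P S =
      {{u ! j, u ! k} | j k. j < k \<and> k < length u \<and> stable_perm u w k < stable_perm u w j}"
      by (simp add: Do_def Let_def u_def w_def)
    have "(\<forall>p\<in>Do \<Sigma> \<sigma>N P S. \<not> p \<subseteq> D) \<longleftrightarrow>
      \<not> (\<exists>j k. j < k \<and> k < length u \<and> u ! j \<in> D \<and> u ! k \<in> D \<and>
              stable_perm u w k < stable_perm u w j)"
    proof
      assume none: "\<forall>p\<in>Do \<Sigma> \<sigma>N P S. \<not> p \<subseteq> D"
      show "\<not> (\<exists>j k. j < k \<and> k < length u \<and> u ! j \<in> D \<and> u ! k \<in> D \<and>
              stable_perm u w k < stable_perm u w j)"
      proof
        assume "\<exists>j k. j < k \<and> k < length u \<and> u ! j \<in> D \<and> u ! k \<in> D \<and>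
              stable_perm u w k < stable_perm u w j"
        then obtain j k where jk: "j < k" "k < length u" "u ! j \<in> D" "u ! k \<in> D"
            "stable_perm u w k < stable_perm u w j"
          by blast
        then have "{u ! j, u ! k} \<in> Do \<Sigma> \<sigma>N P S"
          unfolding Do_eq by blast
        moreover have "{u ! j, u ! k} \<subseteq> D"
          using jk by simp
        ultimately show False
          using none by blast
      qed
    qed (auto simp: Do_eq)
    then show ?thesis
      unfolding filter_eq_iff_no_inversion[OF counts] by (rule sym)
  qed
  finally show ?thesis .
qed

lemma proj_eq_iff_no_discrepancy:
  assumes "D \<subseteq> \<Sigma>"
  shows "proj \<sigma>N D = proj (P S) D \<longleftrightarrow>
         D \<inter> Dm \<Sigma> \<sigma>N P S = {} \<and> (\<forall>p\<in>Do \<Sigma> \<sigma>N P S. \<not> p \<subseteq> D)"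
proof -
  have no_Dm: "D \<inter> Dm \<Sigma> \<sigma>N P S = {}" if "proj \<sigma>N D = proj (P S) D"
  proof -
    have "count_list \<sigma>N a = count_list (P S) a" if "a \<in> D" for a
      using arg_cong[OF \<open>proj \<sigma>N D = proj (P S) D\<close>, of "\<lambda>v. count_list v a"] that
      by (simp add: count_list_proj)
    then show ?thesis
      by (auto simp: Dm_def)
  qed
  moreover have "(\<Sigma> - Dm \<Sigma> \<sigma>N P S) \<inter> D = D" if "D \<inter> Dm \<Sigma> \<sigma>N P S = {}"
    using assms that by blast
  ultimately show ?thesis
    by (metis proj_inter_eq_iff_no_order_discrepancy)
qed

lemma is_discrepancy_iff_proj_neq:
  "is_discrepancy \<Sigma> \<Omega> \<sigma>N P \<delta> \<longleftrightarrow> \<delta> \<subseteq> \<Sigma> \<and> (\<forall>S\<in>\<Omega>. proj \<sigma>N \<delta> \<noteq> proj (P S) \<delta>)"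
proof (cases "\<delta> \<subseteq> \<Sigma>")
  case True
  then show ?thesis
    by (simp add: is_discrepancy_def proj_eq_iff_no_discrepancy)
qed (simp add: is_discrepancy_def)

lemma ex_is_CED_in_image_of:
  assumes ced: "is_CED \<Omega> Obs \<sigma>N P"
    and matching: "\<forall>S'\<in>\<Omega>'. \<exists>\<sigma>\<in>P ` \<Omega>. proj \<sigma>N S' = proj \<sigma> S'"
  shows "\<exists>P'. (\<forall>S'\<in>\<Omega>'. P' S' \<in> P ` \<Omega>) \<and> is_CED \<Omega>' Obs \<sigma>N P'"
proof -
  obtain P' where P': "\<forall>S'\<in>\<Omega>'. P' S' \<in> P ` \<Omega> \<and> proj \<sigma>N S' = proj (P' S') S'"
    using bchoice[of \<Omega>' "\<lambda>S' \<sigma>. \<sigma> \<in> P ` \<Omega> \<and> proj \<sigma>N S' = proj \<sigma> S'"] matching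
    by blast
  then have "is_CED \<Omega>' Obs \<sigma>N P'"
    using ced by (fastforce simp: is_CED_def)
  with P' show ?thesis
    by blast
qed

theorem mainTheorem8:
  fixes \<Sigma> :: "'a set" and \<Omega> :: "'a set set"
    and Obs :: "'a list \<Rightarrow> verdict option"
    and \<sigma>N :: "'a list" and P :: "'a set \<Rightarrow> 'a list"
  assumes fin: "finite \<Sigma>"
    and dist: "is_distribution \<Sigma> \<Omega>"
    and obs: "is_observation \<Sigma> Obs"
    and ced: "is_CED \<Omega> Obs \<sigma>N P"
  shows
    "(\<forall>\<delta>\<in>Discr \<Sigma> \<Omega> \<sigma>N P. \<forall>\<sigma>\<in>P ` \<Omega>. proj \<sigma>N \<delta> \<noteq> proj \<sigma> \<delta>) \<and>
     (\<forall>\<delta>\<in>Discr \<Sigma> \<Omega> \<sigma>N P. \<not> (\<exists>P'. (\<forall>S\<in>\<Omega>. P' S = P S) \<and> P' \<delta> \<in> P ` \<Omega> \<and>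
                                   is_CED (insert \<delta> \<Omega>) Obs \<sigma>N P')) \<and>
     (\<forall>\<Omega>'. is_distribution \<Sigma> \<Omega>' \<longrightarrow>
        (\<forall>\<delta>\<in>Discr \<Sigma> \<Omega> \<sigma>N P. \<forall>Sj\<in>\<Omega>'. \<not> \<delta> \<subseteq> Sj) \<longrightarrow>
        ((\<forall>Sj\<in>\<Omega>'. \<exists>\<sigma>\<in>P ` \<Omega>. proj \<sigma>N Sj = proj \<sigma> Sj) \<and>
        (\<exists>P''. (\<forall>S\<in>\<Omega>'. P'' S \<in> P ` \<Omega>) \<and> is_CED \<Omega>' Obs \<sigma>N P'')))"
proof -
  have separated: "proj \<sigma>N \<delta> \<noteq> proj \<sigma> \<delta>" if "\<delta> \<in> Discr \<Sigma> \<Omega> \<sigma>N P" "\<sigma> \<in> P ` \<Omega>" for \<delta> \<sigma>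
    using that by (auto simp: Discr_def is_discrepancy_iff_proj_neq)
  have no_extension:
    "\<not> (\<exists>P'. (\<forall>S\<in>\<Omega>. P' S = P S) \<and> P' \<delta> \<in> P ` \<Omega> \<and> is_CED (insert \<delta> \<Omega>) Obs \<sigma>N P')"
    if "\<delta> \<in> Discr \<Sigma> \<Omega> \<sigma>N P" for \<delta>
    using separated[OF that] by (auto simp: is_CED_def)
  have matching: "\<forall>Sj\<in>\<Omega>'. \<exists>\<sigma>\<in>P ` \<Omega>. proj \<sigma>N Sj = proj \<sigma> Sj"
    if dist': "is_distribution \<Sigma> \<Omega>'"
      and undetected: "\<forall>\<delta>\<in>Discr \<Sigma> \<Omega> \<sigma>N P. \<forall>Sj\<in>\<Omega>'. \<not> \<delta> \<subseteq> Sj" for \<Omega>'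
  proof
    fix Sj assume Sj: "Sj \<in> \<Omega>'"
    then have "Sj \<notin> Discr \<Sigma> \<Omega> \<sigma>N P"
      using undetected by blast
    moreover have "Sj \<subseteq> \<Sigma>"
      using dist' Sj by (auto simp: is_distribution_def)
    ultimately show "\<exists>\<sigma>\<in>P ` \<Omega>. proj \<sigma>N Sj = proj \<sigma> Sj"
      by (auto simp: Discr_def is_discrepancy_iff_proj_neq)
  qed
  have refinement:
    "(\<forall>Sj\<in>\<Omega>'. \<exists>\<sigma>\<in>P ` \<Omega>. proj \<sigma>N Sj = proj \<sigma> Sj) \<and>
     (\<exists>P''. (\<forall>S\<in>\<Omega>'. P'' S \<in> P ` \<Omega>) \<and> is_CED \<Omega>' Obs \<sigma>N P'')"
    if "is_distribution \<Sigma> \<Omega>'" "\<forall>\<delta>\<in>Discr \<Sigma> \<Omega> \<sigma>N P. \<forall>Sj\<in>\<Omega>'. \<not> \<delta> \<subseteq> Sj" for \<Omega>'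
    using matching[OF that] ex_is_CED_in_image_of[OF ced] by blast
  show ?thesis
    using separated no_extension refinement by blast
qed

end
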